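(* Let $G$ be a graph and $v$ a vertex of $G$ of degree $d(v)$. Let $k$ and $C$ be positive integers with $k\geq d(v)+2$, and let $\alpha$ and $\beta$ be $k$-colourings of $G$. Suppose that there is a recolouring sequence from $\alpha_{\restriction (G-v)}$ to $\beta_{\restriction (G-v)}$ (in $G-v$) in which the vertices of the neighbourhood $N(v)$ are recoloured at most $C$ times in total. Then this sequence lifts to a recolouring sequence in $G$ from $\alpha$ to $\beta$ in which $v$ is recoloured at most $\lceil \frac{C}{k-d(v)-1}\rceil+1$ times.
   Context: All colourings are proper $k$-colourings (maps $V\to\{1,\dots,k\}$ with adjacent vertices receiving distinct colours). A recolouring sequence is a sequence of colourings in which consecutive colourings differ on exactly one vertex. For a subgraph $H$ of $G$ and a colouring $\sigma$ of $G$, $\sigma_{\restriction H}$ is the restriction of $\sigma$ to $H$. A recolouring sequence $s'$ of $H$ lifts to a recolouring sequence $s$ of $G$ if restricting the colourings of $s$ to $H$ (and deleting consecutive repetitions) yields $s'$, i.e. $s$ performs the recolourings of $s'$ in order, interleaved with recolourings of vertices outside $H$. *)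

theory Defs
  imports Complex_Main
begin

definition graph :: "'a set \<Rightarrow> ('a \<Rightarrow> 'a \<Rightarrow> bool) \<Rightarrow> bool" where
  "graph V E \<longleftrightarrow> finite V \<and> (\<forall>x y. E x y \<longrightarrow> E y x) \<and> (\<forall>x. \<not> E x x)
     \<and> (\<forall>x y. E x y \<longrightarrow> x \<in> V \<and> y \<in> V)"

definition neighbourhood :: "'a set \<Rightarrow> ('a \<Rightarrow> 'a \<Rightarrow> bool) \<Rightarrow> 'a \<Rightarrow> 'a set" where
  "neighbourhood V E v = {u \<in> V. E v u}"

definition degree :: "'a set \<Rightarrow> ('a \<Rightarrow> 'a \<Rightarrow> bool) \<Rightarrow> 'a \<Rightarrow> nat" where
  "degree V E v = card (neighbourhood V E v)"

text \<open>Proper k-colouring of the graph induced on vertex set V: a map V \<rightarrow> {1..k}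
(represented as a function that is 0 outside V, so colourings are equal iff they
agree on V) with adjacent vertices receiving distinct colours.\<close>

definition colouring :: "'a set \<Rightarrow> ('a \<Rightarrow> 'a \<Rightarrow> bool) \<Rightarrow> nat \<Rightarrow> ('a \<Rightarrow> nat) \<Rightarrow> bool" where
  "colouring V E k c \<longleftrightarrow> (\<forall>x\<in>V. c x \<in> {1..k}) \<and> (\<forall>x. x \<notin> V \<longrightarrow> c x = 0)
     \<and> (\<forall>x\<in>V. \<forall>y\<in>V. E x y \<longrightarrow> c x \<noteq> c y)"

definition restr :: "'a set \<Rightarrow> ('a \<Rightarrow> nat) \<Rightarrow> ('a \<Rightarrow> nat)" where
  "restr H c = (\<lambda>x. if x \<in> H then c x else 0)"

definition recol_seq :: "'a set \<Rightarrow> ('a \<Rightarrow> 'a \<Rightarrow> bool) \<Rightarrow> nat \<Rightarrow> ('a \<Rightarrow> nat) list \<Rightarrow> bool" where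
  "recol_seq V E k s \<longleftrightarrow> s \<noteq> [] \<and> (\<forall>c\<in>set s. colouring V E k c)
     \<and> (\<forall>i. Suc i < length s \<longrightarrow> card {x \<in> V. (s ! i) x \<noteq> (s ! Suc i) x} = 1)"

definition recol_count :: "'a set \<Rightarrow> ('a \<Rightarrow> nat) list \<Rightarrow> nat" where
  "recol_count S s = card {i. Suc i < length s \<and> (\<exists>x\<in>S. (s ! i) x \<noteq> (s ! Suc i) x)}"

definition lifts :: "'a set \<Rightarrow> ('a \<Rightarrow> nat) list \<Rightarrow> ('a \<Rightarrow> nat) list \<Rightarrow> bool" where
  "lifts H s' s \<longleftrightarrow> remdups_adj (map (restr H) s) = s'"

end

theory Submission
  imports Defs
begin

(* Follow the given sequence in G - v and keep the colour of v until a neighbour is about to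
   be recoloured with it.  At that moment v moves to a colour used neither on N(v) nor by v;
   there are at least m = k - d(v) - 1 of them, and v takes the one whose first conflict comes
   latest.  As each step recolours a single vertex, distinct colours have their first
   conflicts at distinct recolourings of N(v), so the new colour survives at least m - 1
   further recolourings of N(v) (or lasts to the end).  Hence v is recoloured at most
   ceil(C/m) times on the way, plus once at the end to reach its colour in beta. *)

lemma recol_seq_singleton [simp]: "recol_seq V E k [c] \<longleftrightarrow> colouring V E k c"
  by (simp add: recol_seq_def)

lemma recol_seq_Cons_Cons [simp]:
  "recol_seq V E k (c # c' # s) \<longleftrightarrow>
     colouring V E k c \<and> card {x \<in> V. c x \<noteq> c' x} = 1 \<and> recol_seq V E k (c' # s)"
  unfolding recol_seq_def by (simp add: All_less_Suc2 del: One_nat_def) blast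

lemma recol_seq_colouring: "recol_seq V E k s \<Longrightarrow> c \<in> set s \<Longrightarrow> colouring V E k c"
  by (simp add: recol_seq_def)

lemma recol_count_singleton [simp]: "recol_count S [c] = 0"
  by (simp add: recol_count_def)

lemma recol_count_Cons_Cons [simp]:
  "recol_count S (c # c' # s) = of_bool (\<exists>x\<in>S. c x \<noteq> c' x) + recol_count S (c' # s)"
proof -
  define P where "P i \<longleftrightarrow> (\<exists>x\<in>S. ((c # c' # s) ! i) x \<noteq> ((c # c' # s) ! Suc i) x)" for i
  have "{i. Suc i < length (c # c' # s) \<and> P i}
      = (if P 0 then {0} else {}) \<union> Suc ` {i. Suc i < length (c' # s) \<and> P (Suc i)}"
    by (auto simp: image_iff less_Suc_eq_0_disj)
  moreover have "finite {i. Suc i < length (c' # s) \<and> P (Suc i)}"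
    by (rule finite_subset[of _ "{..<length (c' # s)}"]) auto
  ultimately show ?thesis
    by (simp add: recol_count_def P_def card_image card_insert_if)
qed

lemma recol_step_unique:
  assumes "card {x \<in> V. c x \<noteq> c' x} = 1" "x \<in> V" "c x \<noteq> c' x" "y \<in> V" "c y \<noteq> c' y"
  shows "x = y"
proof -
  obtain u where "{x \<in> V. c x \<noteq> c' x} = {u}"
    using assms(1) card_1_singletonE by blast
  then show ?thesis using assms(2-) by (metis (mono_tags, lifting) mem_Collect_eq singletonD)
qed

lemma lifts_singleton [simp]: "lifts H [restr H c] [c]"
  by (simp add: lifts_def)

lemma lifts_Cons_same:
  "lifts H L (c' # s) \<Longrightarrow> restr H c = restr H c' \<Longrightarrow> lifts H L (c # c' # s)"
  by (simp add: lifts_def)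

lemma lifts_Cons_new:
  "lifts H L (c' # s) \<Longrightarrow> restr H c \<noteq> restr H c' \<Longrightarrow> lifts H (restr H c # L) (c # c' # s)"
  by (simp add: lifts_def)

lemma restr_colouring: "colouring H E k c \<Longrightarrow> restr H c = c"
  by (auto simp: colouring_def restr_def)

lemma restr_fun_upd_notin: "v \<notin> H \<Longrightarrow> restr H (c(v := a)) = restr H c"
  by (auto simp: restr_def)

fun hit_time :: "'a set \<Rightarrow> nat \<Rightarrow> ('a \<Rightarrow> nat) list \<Rightarrow> nat" where
  "hit_time N a (c # c' # s) =
     (if \<exists>x\<in>N. c x \<noteq> c' x \<and> c' x = a then 0
      else of_bool (\<exists>x\<in>N. c x \<noteq> c' x) + hit_time N a (c' # s))"
| "hit_time N a _ = 0"

lemma hit_time_le_recol_count: "hit_time N a s \<le> recol_count N s"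
  by (induction N a s rule: hit_time.induct) auto

lemma hit_time_inj:
  assumes "recol_seq W E k s" "N \<subseteq> W"
    and "hit_time N a s = hit_time N b s" "hit_time N a s < recol_count N s"
  shows "a = b"
  using assms
proof (induction s rule: induct_list012)
  case (3 c c' s)
  show ?case
  proof (cases "\<exists>x\<in>N. c x \<noteq> c' x \<and> (c' x = a \<or> c' x = b)")
    case True
    then have "\<exists>x\<in>N. c x \<noteq> c' x \<and> c' x = a" "\<exists>y\<in>N. c y \<noteq> c' y \<and> c' y = b"
      using "3.prems"(3) by (auto split: if_splits)
    then show ?thesis
      using recol_step_unique[of W c c'] "3.prems"(1,2) by auto
  next
    case False
    then have "(\<exists>x\<in>N. c x \<noteq> c' x \<and> c' x = a) = False"
      and "(\<exists>x\<in>N. c x \<noteq> c' x \<and> c' x = b) = False"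
      by auto
    then have "hit_time N a (c' # s) = hit_time N b (c' # s)"
      and "hit_time N a (c' # s) < recol_count N (c' # s)"
      using "3.prems"(3,4) by (simp_all only: hit_time.simps if_False recol_count_Cons_Cons)
    then show ?thesis
      using "3.IH"(2) "3.prems"(1,2) by simp
  qed
qed (simp_all add: recol_count_def)

lemma exists_late_hit_colour:
  assumes "recol_seq W E k s" "N \<subseteq> W" "finite A" "0 < m" "m \<le> card A"
  shows "\<exists>a\<in>A. min (m - 1) (recol_count N s) \<le> hit_time N a s"
proof (rule ccontr)
  assume "\<not> ?thesis"
  then have early: "\<forall>a\<in>A. hit_time N a s < min (m - 1) (recol_count N s)"
    by auto
  have "inj_on (\<lambda>a. hit_time N a s) A"
  proof (rule inj_onI)
    fix a b assume "a \<in> A" "b \<in> A" "hit_time N a s = hit_time N b s"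
    then show "a = b"
      using hit_time_inj[OF assms(1,2)] early by fastforce
  qed
  moreover have "(\<lambda>a. hit_time N a s) ` A \<subseteq> {..<m - 1}"
    using early by auto
  ultimately have "card A \<le> card {..<m - 1}"
    by (rule card_inj_on_le) simp
  then show False
    using assms(4,5) by simp
qed

lemma Suc_round_up_div_le:
  fixes m R h :: nat
  assumes "0 < m" "min (m - 1) R \<le> h"
  shows "Suc ((R - h + m - 1) div m) \<le> (Suc R + m - 1) div m"
proof -
  have "(R - h + m - 1) div m \<le> R div m"
  proof (cases "h < R")
    case True
    then show ?thesis
      using assms(2) by (intro div_le_mono) linarith
  next
    case False
    then show ?thesis
      using assms(1) by simp
  qed
  then show ?thesis
    using assms(1) by simp
qed

lemma round_up_div_le_nat_ceiling:
  fixes C m :: nat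
  assumes "0 < m"
  shows "(C + m - 1) div m \<le> nat \<lceil>real C / real m\<rceil>"
proof -
  define q where "q = nat \<lceil>real C / real m\<rceil>"
  have "real q = of_int \<lceil>real C / real m\<rceil>"
    by (simp add: q_def)
  then have "real C \<le> real q * real m"
    using assms by (simp add: ceiling_divide_upper)
  then have "C \<le> q * m"
    by (metis of_nat_le_iff of_nat_mult)
  then have "C + m - 1 < (q + 1) * m"
    using assms by simp
  then have "(C + m - 1) div m < q + 1"
    using assms by (simp add: div_less_iff_less_mult)
  then show ?thesis
    by (simp add: q_def)
qed

locale vertex_extension =
  fixes V :: "'a set" and E :: "'a \<Rightarrow> 'a \<Rightarrow> bool" and k :: nat and v :: 'a
  assumes graph: "graph V E" and vertex: "v \<in> V" and enough_colours: "degree V E v + 2 \<le> k"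
begin

abbreviation "W \<equiv> V - {v}"
abbreviation "N \<equiv> neighbourhood V E v"
abbreviation "spare \<equiv> k - degree V E v - 1"

definition available :: "('a \<Rightarrow> nat) \<Rightarrow> nat \<Rightarrow> bool" where
  "available c a \<longleftrightarrow> a \<in> {1..k} \<and> (\<forall>x\<in>N. c x \<noteq> a)"

lemma neighbourhood_subset: "N \<subseteq> W"
  using graph by (auto simp: graph_def neighbourhood_def)

lemma finite_neighbourhood: "finite N"
  using graph by (auto simp: graph_def neighbourhood_def)

lemma spare_pos: "0 < spare"
  using enough_colours by linarith

lemma colouring_fun_upd:
  assumes "colouring W E k c" "available c a"
  shows "colouring V E k (c(v := a))"
  unfolding colouring_def
proof (intro conjI ballI allI impI)
  fix x assume "x \<in> V"
  then show "(c(v := a)) x \<in> {1..k}"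
    using assms by (auto simp: colouring_def available_def)
next
  fix x assume "x \<notin> V"
  then show "(c(v := a)) x = 0"
    using assms(1) vertex by (auto simp: colouring_def)
next
  have adjacent: "x \<in> N" if "E x v \<or> E v x" for x
    using graph that by (auto simp: graph_def neighbourhood_def)
  fix x y assume "x \<in> V" "y \<in> V" "E x y"
  moreover have "\<not> E v v"
    using graph by (simp add: graph_def)
  ultimately show "(c(v := a)) x \<noteq> (c(v := a)) y"
    using assms adjacent unfolding colouring_def available_def by (cases "x = v"; cases "y = v") auto
qed

lemma exists_late_available_colour:
  assumes "recol_seq W E k s"
  shows "\<exists>a'. available c a' \<and> a' \<noteq> a \<and> min (spare - 1) (recol_count N s) \<le> hit_time N a' s"
proof -
  define A where "A = {1..k} - (c ` N \<union> {a})"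
  have "card (c ` N \<union> {a}) \<le> degree V E v + 1"
    using card_image_le[OF finite_neighbourhood, of c] card_Un_le[of "c ` N" "{a}"]
    by (simp add: degree_def)
  then have "spare \<le> card A"
    using diff_card_le_card_Diff[of "c ` N \<union> {a}" "{1..k}"] finite_neighbourhood
    by (simp add: A_def)
  moreover have "finite A"
    by (simp add: A_def)
  ultimately obtain a' where "a' \<in> A" "min (spare - 1) (recol_count N s) \<le> hit_time N a' s"
    using exists_late_hit_colour[OF assms neighbourhood_subset _ spare_pos] by blast
  then show ?thesis
    by (auto simp: A_def available_def)
qed

lemma available_restr: "colouring V E k c \<Longrightarrow> available (restr W c) (c v)"
  using graph vertex
  by (auto simp: available_def colouring_def restr_def neighbourhood_def graph_def)

lemma restr_fun_upd_self: "colouring V E k c \<Longrightarrow> (restr W c)(v := c v) = c"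
  by (auto simp: restr_def colouring_def fun_eq_iff)

definition lifting :: "('a \<Rightarrow> nat) list \<Rightarrow> nat \<Rightarrow> ('a \<Rightarrow> nat) list \<Rightarrow> bool" where
  "lifting L a s \<longleftrightarrow> recol_seq V E k s \<and> hd s = (hd L)(v := a) \<and> lifts W L s"

lemma lifting_singleton: "colouring W E k c \<Longrightarrow> available c a \<Longrightarrow> lifting [c] a [c(v := a)]"
  using colouring_fun_upd lifts_singleton[of W "c(v := a)"]
  by (simp add: lifting_def restr_fun_upd_notin restr_colouring)

lemma lifting_Cons_W_step:
  assumes "lifting (c' # L) a s" "colouring W E k c" "colouring W E k c'"
    and "card {x \<in> W. c x \<noteq> c' x} = 1" "available c a"
  shows "lifting (c # c' # L) a (c(v := a) # s)"
    and "recol_count {v} (c(v := a) # s) = recol_count {v} s"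
    and "last (c(v := a) # s) = last s"
proof -
  obtain s0 where s0: "s = c'(v := a) # s0"
    using assms(1) by (metis lifting_def list.collapse list.sel(1) recol_seq_def)
  have "{x \<in> V. (c(v := a)) x \<noteq> (c'(v := a)) x} = {x \<in> W. c x \<noteq> c' x}"
    by auto
  then have "recol_seq V E k (c(v := a) # s)"
    using assms colouring_fun_upd s0 by (simp add: lifting_def)
  moreover have "c \<noteq> c'"
    using assms(4) by (auto simp: card_1_singleton_iff)
  ultimately show "lifting (c # c' # L) a (c(v := a) # s)"
    using lifts_Cons_new[of W "c' # L" "c'(v := a)" s0 "c(v := a)"] assms(1-3) s0
    by (simp add: lifting_def restr_fun_upd_notin restr_colouring)
  show "recol_count {v} (c(v := a) # s) = recol_count {v} s" "last (c(v := a) # s) = last s"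
    using s0 by simp_all
qed

lemma lifting_Cons_v_step:
  assumes "lifting L a' s" "colouring W E k (hd L)" "available (hd L) a" "a \<noteq> a'"
  shows "lifting L a ((hd L)(v := a) # s)"
    and "recol_count {v} ((hd L)(v := a) # s) = Suc (recol_count {v} s)"
    and "last ((hd L)(v := a) # s) = last s"
proof -
  obtain s0 where s0: "s = (hd L)(v := a') # s0"
    using assms(1) by (metis lifting_def list.collapse recol_seq_def)
  have "{x \<in> V. ((hd L)(v := a)) x \<noteq> ((hd L)(v := a')) x} = {v}"
    using vertex assms(4) by auto
  then show "lifting L a ((hd L)(v := a) # s)"
    using assms colouring_fun_upd lifts_Cons_same[of W L _ s0 "(hd L)(v := a)"] s0
    by (simp add: lifting_def restr_fun_upd_notin)
  show "recol_count {v} ((hd L)(v := a) # s) = Suc (recol_count {v} s)"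
    and "last ((hd L)(v := a) # s) = last s"
    using s0 assms(4) by simp_all
qed

lemma available_after_step:
  assumes "card {x \<in> W. c x \<noteq> c' x} = 1" "available c a'"
    and "u \<in> N" "c u \<noteq> c' u" "c' u \<noteq> a'"
  shows "available c' a'"
  unfolding available_def
proof (intro conjI ballI)
  fix x assume "x \<in> N"
  then show "c' x \<noteq> a'"
    using assms recol_step_unique[OF assms(1)] neighbourhood_subset
    by (cases "c x = c' x") (auto simp: available_def)
qed (use assms(2) in \<open>simp add: available_def\<close>)

(* ceil((R - h) / m) + 1, where R counts the recolourings of N along L and h those before
   the first conflict with the colour a of v. *)
definition budget :: "('a \<Rightarrow> nat) list \<Rightarrow> nat \<Rightarrow> nat" where
  "budget L a = (recol_count N L - hit_time N a L + spare - 1) div spare + 1"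

lemma budget_Cons_miss:
  "\<not> (\<exists>x\<in>N. c x \<noteq> c' x \<and> c' x = a) \<Longrightarrow> budget (c # c' # L) a = budget (c' # L) a"
  using hit_time_le_recol_count[of N a "c' # L"] by (auto simp: budget_def)

lemma budget_Cons_hit:
  assumes "\<exists>x\<in>N. c x \<noteq> c' x \<and> c' x = a"
    and "min (spare - 1) (recol_count N (c' # L)) \<le> hit_time N a' (c' # L)"
  shows "Suc (budget (c' # L) a') \<le> budget (c # c' # L) a"
  using Suc_round_up_div_le[OF spare_pos assms(2)] assms(1) by (auto simp: budget_def)

lemma lift_singleton:
  assumes "colouring W E k c" "available c a" "available c b"
  shows "\<exists>s. lifting [c] a s \<and> last s = c(v := b) \<and> recol_count {v} s \<le> budget [c] a"
proof -
  have budget: "budget [c] a = 1"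
    using spare_pos by (simp add: budget_def)
  note lift_b = lifting_singleton[OF assms(1,3)]
  show ?thesis
  proof (cases "a = b")
    case True
    then show ?thesis
      using lift_b budget by (intro exI[of _ "[c(v := b)]"]) simp
  next
    case False
    note lift_v = lifting_Cons_v_step[OF lift_b, unfolded list.sel(1), OF assms(1,2) False]
    then show ?thesis
      using budget by (intro exI[of _ "[c(v := a), c(v := b)]"]) simp
  qed
qed

lemma lift_Cons:
  assumes "recol_seq W E k (c # c' # L)" "available c a"
    and lift': "\<And>a'. available c' a' \<Longrightarrow>
      \<exists>s. lifting (c' # L) a' s \<and> last s = d \<and> recol_count {v} s \<le> budget (c' # L) a'"
  shows "\<exists>s. lifting (c # c' # L) a s \<and> last s = d \<and> recol_count {v} s \<le> budget (c # c' # L) a"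
proof -
  have step: "colouring W E k c" "colouring W E k c'" "card {x \<in> W. c x \<noteq> c' x} = 1"
    using assms(1) recol_seq_colouring[OF assms(1)] by simp_all
  show ?thesis
  proof (cases "\<exists>x\<in>N. c x \<noteq> c' x \<and> c' x = a")
    case False
    then have "available c' a"
      using assms(2) by (auto simp: available_def)
    then obtain s where s: "lifting (c' # L) a s" "last s = d" "recol_count {v} s \<le> budget (c' # L) a"
      using lift' by blast
    then show ?thesis
      using lifting_Cons_W_step[OF s(1) step assms(2)] budget_Cons_miss[OF False]
      by (intro exI[of _ "c(v := a) # s"]) simp
  next
    case True
    then obtain u where u: "u \<in> N" "c u \<noteq> c' u" "c' u = a"
      by blast
    obtain a' where a': "available c a'" "a' \<noteq> a"
      "min (spare - 1) (recol_count N (c' # L)) \<le> hit_time N a' (c' # L)"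
      using exists_late_available_colour[of "c' # L" c a] assms(1) by auto
    then have "available c' a'"
      using available_after_step[OF step(3) _ u(1,2)] u(3) by simp
    then obtain s where s: "lifting (c' # L) a' s" "last s = d" "recol_count {v} s \<le> budget (c' # L) a'"
      using lift' by blast
    have hd: "hd (c # c' # L) = c"
      by simp
    note lift_W = lifting_Cons_W_step[OF s(1) step a'(1)]
    note lift_v = lifting_Cons_v_step[OF lift_W(1), unfolded hd, OF step(1) assms(2) a'(2)[symmetric]]
    show ?thesis
      using lift_v lift_W s(2,3) budget_Cons_hit[OF True a'(3)]
      by (intro exI[of _ "c(v := a) # c(v := a') # s"]) simp
  qed
qed

theorem lift_recol_seq:
  assumes "recol_seq W E k L" "available (hd L) a" "available (last L) b"
  shows "\<exists>s. lifting L a s \<and> last s = (last L)(v := b) \<and> recol_count {v} s \<le> budget L a"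
  using assms
proof (induction L arbitrary: a rule: induct_list012)
  case 1
  then show ?case
    by (simp add: recol_seq_def)
next
  case (2 c)
  then have "colouring W E k c" "available c a" "available c b"
    by simp_all
  then obtain s where "lifting [c] a s" "last s = c(v := b)" "recol_count {v} s \<le> budget [c] a"
    using lift_singleton by blast
  then show ?case
    by (intro exI[of _ s]) simp
next
  case (3 c c' L)
  have last: "last (c # c' # L) = last (c' # L)"
    by simp
  have "recol_seq W E k (c' # L)"
    using "3.prems"(1) by simp
  note lift' = "3.IH"(2)[OF this, unfolded list.sel(1), OF _ "3.prems"(3)[unfolded last]]
  show ?case
    unfolding last by (rule lift_Cons[OF "3.prems"(1) "3.prems"(2)[unfolded list.sel(1)] lift'])
qed

end

theorem lemma1:
  fixes V :: "'a set" and E :: "'a \<Rightarrow> 'a \<Rightarrow> bool" and v :: 'a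
    and k C :: nat and \<alpha> \<beta> :: "'a \<Rightarrow> nat" and s' :: "('a \<Rightarrow> nat) list"
  assumes "graph V E" and "v \<in> V"
    and "k > 0" and "C > 0" and "k \<ge> degree V E v + 2"
    and "colouring V E k \<alpha>" and "colouring V E k \<beta>"
    and "recol_seq (V - {v}) E k s'"
    and "hd s' = restr (V - {v}) \<alpha>" and "last s' = restr (V - {v}) \<beta>"
    and "recol_count (neighbourhood V E v) s' \<le> C"
  shows "\<exists>s. recol_seq V E k s \<and> hd s = \<alpha> \<and> last s = \<beta> \<and> lifts (V - {v}) s' s
           \<and> recol_count {v} s
               \<le> nat \<lceil>real C / real (k - degree V E v - 1)\<rceil> + 1"
proof -
  interpret vertex_extension V E k v
    using assms(1,2,5) by unfold_locales
  have "available (hd s') (\<alpha> v)" "available (last s') (\<beta> v)"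
    using available_restr assms(6,7,9,10) by simp_all
  then obtain s where s: "lifting s' (\<alpha> v) s" "last s = (last s')(v := \<beta> v)"
    "recol_count {v} s \<le> budget s' (\<alpha> v)"
    using lift_recol_seq[OF assms(8)] by blast
  have "(recol_count N s' - hit_time N (\<alpha> v) s' + spare - 1) div spare \<le> (C + spare - 1) div spare"
    using assms(11) by (intro div_le_mono) linarith
  also have "\<dots> \<le> nat \<lceil>real C / real spare\<rceil>"
    using round_up_div_le_nat_ceiling[OF spare_pos] .
  finally show ?thesis
    using s restr_fun_upd_self assms(6,7,9,10) by (auto simp: lifting_def budget_def)
qed

end
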